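(* Let $p$ be an odd prime, $r\ge3$ with $p\nmid r$, $D=\mathrm{D}_{2r}$, and let $G=V\rtimes_\psi D$ with $V=\mathbb{Z}_p^d$ and $\psi:D\to\mathrm{GL}(V)$ irreducible and non-trivial. Let $A=\mathrm{Aut}(G)$, $N=\mathrm{N}_A(D)$, and define the homomorphism $\kappa:N\to\mathrm{Aut}(D)$ by $f\mapsto f|_D$. Then $\ker(\kappa)\cong\mathrm{End}_D(V)^\times$ and $\mathrm{im}(\kappa)=\mathrm{Aut}(D)_\psi$, where $\mathrm{Aut}(D)_\psi=\{\sigma\in\mathrm{Aut}(D):\psi\circ\sigma\cong\psi\}$.
   Context: $V\rtimes_\psi D$ is the semidirect product in which $D$ acts on $V=\mathbb{F}_p^d$ via $\psi$. $\mathrm{N}_A(D)=\{f\in A:f(D)=D\}$. $\mathrm{End}_D(V)$ is the ring of $\mathbb{F}_pD$-module endomorphisms of $V$ and $\mathrm{End}_D(V)^\times$ its unit group. *)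

theory Defs
  imports "HOL-Algebra.Algebra"
begin

text \<open>Element (i, b) stands for rho^i tau^b, where rho is a rotation of order r and
  tau a reflection; tau rho tau = rho^(-1).\<close>
definition dihedral_group :: "nat \<Rightarrow> (nat \<times> bool) monoid" where
  "dihedral_group r =
    \<lparr>carrier = {0..<r} \<times> UNIV,
     Group.monoid.mult = (\<lambda>(i, a) (j, b). (if a then (i + (r - j)) mod r else (i + j) mod r, a \<noteq> b)),
     one = (0, False)\<rparr>"

definition Fp_vec :: "int \<Rightarrow> nat \<Rightarrow> (nat \<Rightarrow> int) set" where
  "Fp_vec p d = {v. \<forall>i. (i < d \<longrightarrow> 0 \<le> v i \<and> v i < p) \<and> (d \<le> i \<longrightarrow> v i = 0)}"

definition vadd :: "int \<Rightarrow> (nat \<Rightarrow> int) \<Rightarrow> (nat \<Rightarrow> int) \<Rightarrow> (nat \<Rightarrow> int)" where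
  "vadd p v w = (\<lambda>i. (v i + w i) mod p)"

definition vsmult :: "int \<Rightarrow> int \<Rightarrow> (nat \<Rightarrow> int) \<Rightarrow> (nat \<Rightarrow> int)" where
  "vsmult p c v = (\<lambda>i. (c * v i) mod p)"

definition vzero :: "nat \<Rightarrow> int" where
  "vzero = (\<lambda>i. 0)"

definition Fp_linear :: "int \<Rightarrow> nat \<Rightarrow> ((nat \<Rightarrow> int) \<Rightarrow> (nat \<Rightarrow> int)) \<Rightarrow> bool" where
  "Fp_linear p d f \<longleftrightarrow>
     f \<in> Fp_vec p d \<rightarrow> Fp_vec p d \<and>
     (\<forall>v \<in> Fp_vec p d. \<forall>w \<in> Fp_vec p d. f (vadd p v w) = vadd p (f v) (f w)) \<and>
     (\<forall>c. \<forall>v \<in> Fp_vec p d. f (vsmult p c v) = vsmult p c (f v))"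

definition GL_group :: "int \<Rightarrow> nat \<Rightarrow> ((nat \<Rightarrow> int) \<Rightarrow> (nat \<Rightarrow> int)) monoid" where
  "GL_group p d = BijGroup (Fp_vec p d) \<lparr>carrier := {f \<in> Bij (Fp_vec p d). Fp_linear p d f}\<rparr>"

definition Fp_subspace :: "int \<Rightarrow> nat \<Rightarrow> (nat \<Rightarrow> int) set \<Rightarrow> bool" where
  "Fp_subspace p d W \<longleftrightarrow> W \<subseteq> Fp_vec p d \<and> vzero \<in> W \<and>
     (\<forall>v \<in> W. \<forall>w \<in> W. vadd p v w \<in> W) \<and> (\<forall>c. \<forall>v \<in> W. vsmult p c v \<in> W)"

definition irreducible_rep ::
  "int \<Rightarrow> nat \<Rightarrow> ('g, 'b) monoid_scheme \<Rightarrow> ('g \<Rightarrow> (nat \<Rightarrow> int) \<Rightarrow> (nat \<Rightarrow> int)) \<Rightarrow> bool" where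
  "irreducible_rep p d D \<psi> \<longleftrightarrow> Fp_vec p d \<noteq> {vzero} \<and>
     (\<forall>W. Fp_subspace p d W \<and> (\<forall>x \<in> carrier D. \<psi> x ` W \<subseteq> W) \<longrightarrow>
          W = {vzero} \<or> W = Fp_vec p d)"

definition trivial_rep ::
  "int \<Rightarrow> nat \<Rightarrow> ('g, 'b) monoid_scheme \<Rightarrow> ('g \<Rightarrow> (nat \<Rightarrow> int) \<Rightarrow> (nat \<Rightarrow> int)) \<Rightarrow> bool" where
  "trivial_rep p d D \<psi> \<longleftrightarrow> (\<forall>x \<in> carrier D. \<psi> x = \<one>\<^bsub>GL_group p d\<^esub>)"

definition rep_iso ::
  "int \<Rightarrow> nat \<Rightarrow> ('g, 'b) monoid_scheme \<Rightarrow> ('g \<Rightarrow> (nat \<Rightarrow> int) \<Rightarrow> (nat \<Rightarrow> int))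
     \<Rightarrow> ('g \<Rightarrow> (nat \<Rightarrow> int) \<Rightarrow> (nat \<Rightarrow> int)) \<Rightarrow> bool" where
  "rep_iso p d D \<rho> \<psi> \<longleftrightarrow> (\<exists>T \<in> carrier (GL_group p d).
      \<forall>x \<in> carrier D. \<forall>v \<in> Fp_vec p d. T (\<rho> x v) = \<psi> x (T v))"

definition End_ring ::
  "int \<Rightarrow> nat \<Rightarrow> ('g, 'b) monoid_scheme \<Rightarrow> ('g \<Rightarrow> (nat \<Rightarrow> int) \<Rightarrow> (nat \<Rightarrow> int))
     \<Rightarrow> ((nat \<Rightarrow> int) \<Rightarrow> (nat \<Rightarrow> int)) ring" where
  "End_ring p d D \<psi> =
    \<lparr>carrier = {f \<in> extensional (Fp_vec p d). Fp_linear p d f \<and>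
                  (\<forall>x \<in> carrier D. \<forall>v \<in> Fp_vec p d. f (\<psi> x v) = \<psi> x (f v))},
     Group.monoid.mult = (\<lambda>f g. compose (Fp_vec p d) f g),
     one = (\<lambda>v \<in> Fp_vec p d. v),
     ring.zero = (\<lambda>v \<in> Fp_vec p d. vzero),
     ring.add = (\<lambda>f g. \<lambda>v \<in> Fp_vec p d. vadd p (f v) (g v))\<rparr>"

definition sdprod ::
  "int \<Rightarrow> nat \<Rightarrow> ('g, 'b) monoid_scheme \<Rightarrow> ('g \<Rightarrow> (nat \<Rightarrow> int) \<Rightarrow> (nat \<Rightarrow> int))
     \<Rightarrow> ((nat \<Rightarrow> int) \<times> 'g) monoid" where
  "sdprod p d D \<psi> =
    \<lparr>carrier = Fp_vec p d \<times> carrier D,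
     Group.monoid.mult = (\<lambda>(v, x) (w, y). (vadd p v (\<psi> x w), x \<otimes>\<^bsub>D\<^esub> y)),
     one = (vzero, \<one>\<^bsub>D\<^esub>)\<rparr>"

definition D_sub :: "('g, 'b) monoid_scheme \<Rightarrow> ((nat \<Rightarrow> int) \<times> 'g) set" where
  "D_sub D = {vzero} \<times> carrier D"

definition normaliser_D ::
  "int \<Rightarrow> nat \<Rightarrow> ('g, 'b) monoid_scheme \<Rightarrow> ('g \<Rightarrow> (nat \<Rightarrow> int) \<Rightarrow> (nat \<Rightarrow> int))
     \<Rightarrow> (((nat \<Rightarrow> int) \<times> 'g) \<Rightarrow> ((nat \<Rightarrow> int) \<times> 'g)) set" where
  "normaliser_D p d D \<psi> = {f \<in> auto (sdprod p d D \<psi>). f ` D_sub D = D_sub D}"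

definition kappa ::
  "('g, 'b) monoid_scheme \<Rightarrow> (((nat \<Rightarrow> int) \<times> 'g) \<Rightarrow> ((nat \<Rightarrow> int) \<times> 'g)) \<Rightarrow> ('g \<Rightarrow> 'g)" where
  "kappa D f = (\<lambda>x \<in> carrier D. snd (f (vzero, x)))"

end

theory Submission
  imports Defs
begin

(* If p is coprime to |D|, every automorphism f of G = V \<rtimes> D maps V into itself, because the
   D-component of f(v) has order dividing both p and |D|.  If f moreover normalises D, then
   f(v, x) = (T v, \<sigma> x) with \<sigma> = \<kappa>(f) an automorphism of D and T a linear bijection of V
   satisfying T \<circ> \<psi>(x) = \<psi>(\<sigma> x) \<circ> T; conversely every such pair (T, \<sigma>) defines an element of N.
   So the image of \<kappa> consists of the \<sigma> with \<psi> \<circ> \<sigma> \<cong> \<psi>, and the kernel (\<sigma> = id) is the image of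
   the invertible D-module endomorphisms T under T \<mapsto> ((v, x) \<mapsto> (T v, x)). *)

lemma bij_betw_map_prod_iff:
  assumes "A \<noteq> {}" and "B \<noteq> {}"
  shows "bij_betw (map_prod f g) (A \<times> B) (A' \<times> B') \<longleftrightarrow> bij_betw f A A' \<and> bij_betw g B B'"
proof
  assume bij: "bij_betw (map_prod f g) (A \<times> B) (A' \<times> B')"
  obtain a b where ab: "a \<in> A" "b \<in> B" using assms by blast
  have inj: "inj_on (map_prod f g) (A \<times> B)" and img: "map_prod f g ` (A \<times> B) = A' \<times> B'"
    using bij by (auto simp: bij_betw_def)
  have "inj_on f A"
    using ab inj_onD[OF inj] by (fastforce intro: inj_onI)
  moreover have "inj_on g B"
    using ab inj_onD[OF inj] by (fastforce intro: inj_onI)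
  moreover have "f ` A = fst ` (A' \<times> B')" "g ` B = snd ` (A' \<times> B')"
    unfolding img[symmetric] using ab by force+
  moreover have "A' \<noteq> {}" "B' \<noteq> {}"
    using img ab by blast+
  ultimately show "bij_betw f A A' \<and> bij_betw g B B'" by (simp add: bij_betw_def)
next
  assume "bij_betw f A A' \<and> bij_betw g B B'"
  then show "bij_betw (map_prod f g) (A \<times> B) (A' \<times> B')" by (simp add: bij_betw_map_prod)
qed

section \<open>Dihedral groups\<close>

lemma dihedral_group_mult:
  assumes "j < r"
  shows "(i, a) \<otimes>\<^bsub>dihedral_group r\<^esub> (j, b) =
           (nat ((int i + (if a then - int j else int j)) mod int r), a \<noteq> b)"
proof -
  have "int ((i + (r - j)) mod r) = int (i + (r - j)) mod int r"
    by (rule zmod_int)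
  also have "int (i + (r - j)) = (int i - int j) + int r"
    using assms by simp
  also have "(int i - int j + int r) mod int r = (int i - int j) mod int r"
    by (rule mod_add_self2)
  finally have "(i + (r - j)) mod r = nat ((int i - int j) mod int r)"
    by (metis nat_int)
  moreover have "(i + j) mod r = nat ((int i + int j) mod int r)"
    by (metis nat_int of_nat_add zmod_int)
  ultimately show ?thesis by (simp add: dihedral_group_def)
qed

lemma group_dihedral_group:
  assumes "0 < r" shows "group (dihedral_group r)"
proof (rule groupI)
  let ?D = "dihedral_group r"
  have mult: "x \<otimes>\<^bsub>?D\<^esub> y =
      (nat ((int (fst x) + (if snd x then - int (fst y) else int (fst y))) mod int r), snd x \<noteq> snd y)"
    if "y \<in> carrier ?D" for x y
  proof -
    have "fst y < r" using that by (auto simp: dihedral_group_def)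
    then show ?thesis by (cases x; cases y) (simp only: dihedral_group_mult fst_conv snd_conv)
  qed
  show "\<one>\<^bsub>?D\<^esub> \<in> carrier ?D" using assms by (simp add: dihedral_group_def)
  fix x y z assume x: "x \<in> carrier ?D" and y: "y \<in> carrier ?D" and z: "z \<in> carrier ?D"
  show "x \<otimes>\<^bsub>?D\<^esub> y \<in> carrier ?D"
    using assms by (simp add: mult y) (simp add: dihedral_group_def nat_less_iff)
  show "x \<otimes>\<^bsub>?D\<^esub> y \<otimes>\<^bsub>?D\<^esub> z = x \<otimes>\<^bsub>?D\<^esub> (y \<otimes>\<^bsub>?D\<^esub> z)"
  proof -
    have "y \<otimes>\<^bsub>?D\<^esub> z \<in> carrier ?D"
      using assms by (simp add: mult z) (simp add: dihedral_group_def nat_less_iff)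
    then show ?thesis using assms by (simp add: mult y z) (auto simp: mod_simps algebra_simps)
  qed
  show "\<one>\<^bsub>?D\<^esub> \<otimes>\<^bsub>?D\<^esub> x = x" using x by (auto simp: dihedral_group_def)
  show "\<exists>y\<in>carrier ?D. y \<otimes>\<^bsub>?D\<^esub> x = \<one>\<^bsub>?D\<^esub>"
  proof (cases "snd x")
    case True
    then show ?thesis using x by (intro bexI[of _ x]) (auto simp: dihedral_group_def)
  next
    case False
    then show ?thesis using x assms
      by (intro bexI[of _ "((r - fst x) mod r, False)"])
        (auto simp: dihedral_group_def mod_add_left_eq)
  qed
qed

lemma order_dihedral_group: "order (dihedral_group r) = 2 * r"
  by (simp add: order_def dihedral_group_def card_cartesian_product)

section \<open>Linear maps and representations over Z/p\<close>

definition intertwines ::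
  "int \<Rightarrow> nat \<Rightarrow> ('g, 'b) monoid_scheme \<Rightarrow> ('g \<Rightarrow> (nat \<Rightarrow> int) \<Rightarrow> (nat \<Rightarrow> int))
     \<Rightarrow> ('g \<Rightarrow> (nat \<Rightarrow> int) \<Rightarrow> (nat \<Rightarrow> int)) \<Rightarrow> ((nat \<Rightarrow> int) \<Rightarrow> (nat \<Rightarrow> int)) \<Rightarrow> bool" where
  "intertwines p d D \<rho> \<psi> T \<longleftrightarrow> (\<forall>x \<in> carrier D. \<forall>v \<in> Fp_vec p d. T (\<rho> x v) = \<psi> x (T v))"

locale Fp_space =
  fixes p :: int and d :: nat
  assumes p_pos: "0 < p"
begin

abbreviation V where "V \<equiv> Fp_vec p d"

lemma mod_Fp_vec: "v \<in> V \<Longrightarrow> v i mod p = v i"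
  using p_pos by (cases "i < d") (auto simp: Fp_vec_def)

lemma vzero_in_Fp_vec [simp]: "vzero \<in> V"
  using p_pos by (simp add: Fp_vec_def vzero_def)

lemma vadd_in_Fp_vec [simp]: "vadd p v w \<in> V" if "v \<in> V" "w \<in> V"
  using p_pos that by (simp add: Fp_vec_def vadd_def)

lemma vsmult_in_Fp_vec [simp]: "v \<in> V \<Longrightarrow> vsmult p c v \<in> V"
  using p_pos by (simp add: Fp_vec_def vsmult_def)

lemma vadd_vzero_left [simp]: "v \<in> V \<Longrightarrow> vadd p vzero v = v"
  by (simp add: vadd_def vzero_def mod_Fp_vec)

lemma vadd_vzero_right [simp]: "v \<in> V \<Longrightarrow> vadd p v vzero = v"
  by (simp add: vadd_def vzero_def mod_Fp_vec)

lemma vadd_assoc: "vadd p (vadd p u v) w = vadd p u (vadd p v w)"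
  by (simp add: vadd_def mod_simps add.assoc)

lemma vadd_left_neg: "vadd p (vsmult p (- 1) v) v = vzero"
  by (simp add: vadd_def vsmult_def vzero_def mod_add_left_eq)

lemma Fp_linear_vzero:
  assumes "Fp_linear p d T" shows "T vzero = vzero"
proof -
  have "vsmult p 0 w = vzero" for w by (simp add: vsmult_def vzero_def)
  then show ?thesis using assms unfolding Fp_linear_def by (metis vzero_in_Fp_vec)
qed

lemma Fp_linear_if_additive:
  assumes closed: "T \<in> V \<rightarrow> V" and zero: "T vzero = vzero"
    and additive: "\<And>v w. v \<in> V \<Longrightarrow> w \<in> V \<Longrightarrow> T (vadd p v w) = vadd p (T v) (T w)"
  shows "Fp_linear p d T"
proof -
  have nat_scalar: "T (vsmult p (int n) v) = vsmult p (int n) (T v)" if "v \<in> V" for n v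
  proof (induction n)
    case 0
    then show ?case using zero by (simp add: vsmult_def vzero_def)
  next
    case (Suc n)
    have succ: "vsmult p (int (Suc n)) u = vadd p (vsmult p (int n) u) u" if "u \<in> V" for u
      using that by (simp add: vsmult_def vadd_def mod_Fp_vec mod_simps algebra_simps)
    have "T (vsmult p (int (Suc n)) v) = T (vadd p (vsmult p (int n) v) v)"
      by (simp only: succ[OF \<open>v \<in> V\<close>])
    also have "\<dots> = vadd p (vsmult p (int n) (T v)) (T v)"
      using \<open>v \<in> V\<close> by (simp add: additive Suc.IH)
    also have "\<dots> = vsmult p (int (Suc n)) (T v)"
      using \<open>v \<in> V\<close> closed by (simp only: succ[of "T v"] Pi_iff)
    finally show ?case .
  qed
  have "T (vsmult p c v) = vsmult p c (T v)" if "v \<in> V" for c v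
  proof -
    have reduce: "vsmult p c = vsmult p (int (nat (c mod p)))"
      using p_pos by (simp add: vsmult_def fun_eq_iff mod_simps)
    show ?thesis using nat_scalar[OF that, of "nat (c mod p)"] by (simp only: reduce)
  qed
  then show ?thesis using closed additive by (simp add: Fp_linear_def)
qed

lemma GL_group_carrier: "carrier (GL_group p d) = {T \<in> Bij V. Fp_linear p d T}"
  by (simp add: GL_group_def BijGroup_def)

lemma GL_group_mult: "S \<in> Bij V \<Longrightarrow> T \<in> Bij V \<Longrightarrow> S \<otimes>\<^bsub>GL_group p d\<^esub> T = compose V S T"
  by (simp add: GL_group_def BijGroup_def)

lemma restrict_inv_into_GL_group:
  assumes "T \<in> carrier (GL_group p d)"
  shows "restrict (inv_into V T) V \<in> carrier (GL_group p d)"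
proof -
  have bij: "bij_betw T V V" and lin: "Fp_linear p d T"
    using assms by (auto simp: GL_group_carrier Bij_def)
  let ?S = "restrict (inv_into V T) V"
  have S: "?S v \<in> V" "T (?S v) = v" if "v \<in> V" for v
    using bij that by (auto simp: bij_betw_def inv_into_into f_inv_into_f)
  have ST: "?S (T v) = v" if "v \<in> V" for v
    using bij that by (auto simp: bij_betw_def bij_betw_apply)
  have "?S (vadd p v w) = vadd p (?S v) (?S w)" if "v \<in> V" "w \<in> V" for v w
    using that lin S ST[of "vadd p (?S v) (?S w)"] by (simp add: Fp_linear_def)
  moreover have "?S (vsmult p c v) = vsmult p c (?S v)" if "v \<in> V" for c v
    using that lin S ST[of "vsmult p c (?S v)"] by (simp add: Fp_linear_def)
  ultimately have "Fp_linear p d ?S"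
    using S by (simp add: Fp_linear_def)
  then show ?thesis
    using assms by (simp add: GL_group_carrier restrict_inv_into_Bij)
qed

lemma intertwines_restrict_inv_into:
  assumes T: "T \<in> carrier (GL_group p d)" and \<rho>: "\<And>x. x \<in> carrier D \<Longrightarrow> \<rho> x \<in> V \<rightarrow> V"
    and "intertwines p d D \<rho> \<psi> T"
  shows "intertwines p d D \<psi> \<rho> (restrict (inv_into V T) V)"
  unfolding intertwines_def
proof (intro ballI)
  fix x v assume x: "x \<in> carrier D" and v: "v \<in> V"
  have bij: "bij_betw T V V" using T by (simp add: GL_group_carrier Bij_def)
  define u where "u = inv_into V T v"
  have u: "u \<in> V" "T u = v"
    using bij v by (auto simp: u_def bij_betw_def inv_into_into f_inv_into_f)
  have "\<psi> x v = T (\<rho> x u)"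
    using assms(3) x u by (simp add: intertwines_def)
  moreover have "\<rho> x u \<in> V" using \<rho>[OF x] u by blast
  ultimately show "restrict (inv_into V T) V (\<psi> x v) = \<rho> x (restrict (inv_into V T) V v)"
    using bij u v by (simp add: u_def[symmetric] bij_betw_def bij_betw_apply)
qed

lemma rep_iso_sym:
  assumes "\<And>x. x \<in> carrier D \<Longrightarrow> \<rho> x \<in> V \<rightarrow> V" and "rep_iso p d D \<rho> \<psi>"
  shows "rep_iso p d D \<psi> \<rho>"
  using assms restrict_inv_into_GL_group intertwines_restrict_inv_into
  unfolding rep_iso_def intertwines_def[symmetric] by blast

end

section \<open>Automorphisms of V \<rtimes> D normalising D\<close>

locale Fp_representation = Fp_space +
  fixes D :: "('g, 'b) monoid_scheme" and \<psi> :: "'g \<Rightarrow> (nat \<Rightarrow> int) \<Rightarrow> (nat \<Rightarrow> int)"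
  assumes group_D: "group D" and psi_hom: "\<psi> \<in> hom D (GL_group p d)"
begin

abbreviation G where "G \<equiv> sdprod p d D \<psi>"

lemma psi_in_GL: "x \<in> carrier D \<Longrightarrow> \<psi> x \<in> Bij V \<and> Fp_linear p d (\<psi> x)"
  using psi_hom unfolding hom_def GL_group_carrier by blast

lemma psi_closed [simp]: "x \<in> carrier D \<Longrightarrow> v \<in> V \<Longrightarrow> \<psi> x v \<in> V"
  using psi_in_GL Bij_imp_funcset by blast

lemma psi_vadd: "x \<in> carrier D \<Longrightarrow> v \<in> V \<Longrightarrow> w \<in> V \<Longrightarrow> \<psi> x (vadd p v w) = vadd p (\<psi> x v) (\<psi> x w)"
  using psi_in_GL by (simp add: Fp_linear_def)

lemma psi_vzero [simp]: "x \<in> carrier D \<Longrightarrow> \<psi> x vzero = vzero"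
  using psi_in_GL Fp_linear_vzero by blast

lemma psi_mult: "\<psi> (x \<otimes>\<^bsub>D\<^esub> y) v = \<psi> x (\<psi> y v)"
  if "x \<in> carrier D" "y \<in> carrier D" "v \<in> V"
proof -
  have "\<psi> (x \<otimes>\<^bsub>D\<^esub> y) = \<psi> x \<otimes>\<^bsub>GL_group p d\<^esub> \<psi> y"
    using psi_hom that unfolding hom_def by blast
  then show ?thesis using psi_in_GL that by (simp add: GL_group_mult compose_def)
qed

lemma psi_one [simp]:
  assumes "v \<in> V" shows "\<psi> \<one>\<^bsub>D\<^esub> v = v"
proof -
  have one: "\<one>\<^bsub>D\<^esub> \<in> carrier D" by (simp add: group.is_monoid group_D monoid.one_closed)
  have "\<psi> \<one>\<^bsub>D\<^esub> (\<psi> \<one>\<^bsub>D\<^esub> v) = \<psi> \<one>\<^bsub>D\<^esub> v"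
    using psi_mult[OF one one assms] group_D by (simp add: group.is_monoid monoid.l_one)
  moreover have "inj_on (\<psi> \<one>\<^bsub>D\<^esub>) V"
    using psi_in_GL[OF one] by (simp add: Bij_def bij_betw_def)
  ultimately show ?thesis
    using assms one by (simp add: inj_on_eq_iff)
qed

lemma sdprod_carrier: "carrier G = V \<times> carrier D"
  by (simp add: sdprod_def)

lemma sdprod_mult: "(v, x) \<otimes>\<^bsub>G\<^esub> (w, y) = (vadd p v (\<psi> x w), x \<otimes>\<^bsub>D\<^esub> y)"
  by (simp add: sdprod_def)

lemma sdprod_one: "\<one>\<^bsub>G\<^esub> = (vzero, \<one>\<^bsub>D\<^esub>)"
  by (simp add: sdprod_def)

lemma group_sdprod: "group G"
proof (rule groupI)
  interpret D: group D by (rule group_D)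
  show "\<one>\<^bsub>G\<^esub> \<in> carrier G" by (simp add: sdprod_one sdprod_carrier)
  fix a b c assume a: "a \<in> carrier G" and b: "b \<in> carrier G" and c: "c \<in> carrier G"
  obtain v x w y u z where abc: "a = (v, x)" "b = (w, y)" "c = (u, z)"
    by (cases a, cases b, cases c) blast
  have in_carrier: "v \<in> V" "x \<in> carrier D" "w \<in> V" "y \<in> carrier D" "u \<in> V" "z \<in> carrier D"
    using a b c abc by (auto simp: sdprod_carrier)
  show "a \<otimes>\<^bsub>G\<^esub> b \<in> carrier G"
    using in_carrier by (simp add: abc sdprod_mult sdprod_carrier)
  show "a \<otimes>\<^bsub>G\<^esub> b \<otimes>\<^bsub>G\<^esub> c = a \<otimes>\<^bsub>G\<^esub> (b \<otimes>\<^bsub>G\<^esub> c)"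
    using in_carrier by (simp add: abc sdprod_mult psi_mult psi_vadd vadd_assoc D.m_assoc)
  show "\<one>\<^bsub>G\<^esub> \<otimes>\<^bsub>G\<^esub> a = a"
    using in_carrier by (simp add: abc sdprod_one sdprod_mult)
  let ?a' = "(\<psi> (inv\<^bsub>D\<^esub> x) (vsmult p (- 1) v), inv\<^bsub>D\<^esub> x)"
  have "?a' \<otimes>\<^bsub>G\<^esub> a = \<one>\<^bsub>G\<^esub>"
    using in_carrier by (simp add: abc sdprod_mult sdprod_one psi_vadd[symmetric] vadd_left_neg)
  moreover have "?a' \<in> carrier G"
    using in_carrier by (simp add: sdprod_carrier)
  ultimately show "\<exists>a'\<in>carrier G. a' \<otimes>\<^bsub>G\<^esub> a = \<one>\<^bsub>G\<^esub>" by blast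
qed

lemma snd_hom_sdprod: "snd \<in> hom G D"
  by (auto simp: hom_def sdprod_carrier sdprod_def)

lemma sdprod_vector_pow: "v \<in> V \<Longrightarrow> (v, \<one>\<^bsub>D\<^esub>) [^]\<^bsub>G\<^esub> n = (vsmult p (int n) v, \<one>\<^bsub>D\<^esub>)"
proof (induction n)
  case 0
  then show ?case by (simp add: sdprod_one vsmult_def vzero_def)
next
  case (Suc n)
  have "vadd p (vsmult p (int n) v) v = vsmult p (int (Suc n)) v"
    using Suc.prems by (simp add: vadd_def vsmult_def mod_Fp_vec mod_simps algebra_simps)
  then show ?case
    using Suc group_D by (simp add: sdprod_mult group.is_monoid monoid.l_one)
qed

lemma sdprod_vector_pow_p: "v \<in> V \<Longrightarrow> (v, \<one>\<^bsub>D\<^esub>) [^]\<^bsub>G\<^esub> nat p = \<one>\<^bsub>G\<^esub>"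
  using p_pos by (subst sdprod_vector_pow) (simp_all add: sdprod_one vsmult_def vzero_def)

definition sdprod_map ::
  "((nat \<Rightarrow> int) \<Rightarrow> (nat \<Rightarrow> int)) \<Rightarrow> ('g \<Rightarrow> 'g) \<Rightarrow> (nat \<Rightarrow> int) \<times> 'g \<Rightarrow> (nat \<Rightarrow> int) \<times> 'g" where
  "sdprod_map T \<sigma> = restrict (map_prod T \<sigma>) (carrier G)"

lemma sdprod_map_in_normaliser:
  assumes T: "T \<in> carrier (GL_group p d)" and \<sigma>: "\<sigma> \<in> auto D"
    and intertw: "intertwines p d D \<psi> (\<psi> \<circ> \<sigma>) T"
  shows "sdprod_map T \<sigma> \<in> normaliser_D p d D \<psi>"
proof -
  have T_bij: "bij_betw T V V" and T_lin: "Fp_linear p d T"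
    using T by (auto simp: GL_group_carrier Bij_def)
  have \<sigma>_bij: "bij_betw \<sigma> (carrier D) (carrier D)" and \<sigma>_hom: "\<sigma> \<in> hom D D"
    using \<sigma> by (auto simp: auto_def Bij_def)
  have "sdprod_map T \<sigma> \<in> hom G G"
  proof (rule homI)
    fix a assume "a \<in> carrier G"
    then show "sdprod_map T \<sigma> a \<in> carrier G"
      using T_bij \<sigma>_bij by (auto simp: sdprod_map_def sdprod_carrier bij_betw_apply)
  next
    fix a b assume a: "a \<in> carrier G" and b: "b \<in> carrier G"
    obtain v x w y where ab: "a = (v, x)" "b = (w, y)" by (cases a, cases b) blast
    have in_carrier: "v \<in> V" "x \<in> carrier D" "w \<in> V" "y \<in> carrier D"
      using a b ab by (auto simp: sdprod_carrier)
    have "T (vadd p v (\<psi> x w)) = vadd p (T v) (\<psi> (\<sigma> x) (T w))"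
      using T_lin intertw in_carrier by (simp add: Fp_linear_def intertwines_def)
    moreover have "\<sigma> (x \<otimes>\<^bsub>D\<^esub> y) = \<sigma> x \<otimes>\<^bsub>D\<^esub> \<sigma> y"
      using \<sigma>_hom in_carrier by (simp add: hom_mult)
    moreover have "x \<otimes>\<^bsub>D\<^esub> y \<in> carrier D"
      using group_D in_carrier by (simp add: group.is_monoid monoid.m_closed)
    ultimately show "sdprod_map T \<sigma> (a \<otimes>\<^bsub>G\<^esub> b) = sdprod_map T \<sigma> a \<otimes>\<^bsub>G\<^esub> sdprod_map T \<sigma> b"
      using in_carrier by (simp add: ab sdprod_map_def sdprod_mult sdprod_carrier)
  qed
  moreover have "bij_betw (sdprod_map T \<sigma>) (carrier G) (carrier G)"
    unfolding sdprod_map_def sdprod_carrier by (simp add: bij_betw_map_prod T_bij \<sigma>_bij)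
  moreover have "sdprod_map T \<sigma> ` D_sub D = D_sub D"
  proof -
    have "sdprod_map T \<sigma> ` D_sub D = {T vzero} \<times> \<sigma> ` carrier D"
      by (force simp: D_sub_def sdprod_map_def sdprod_carrier)
    then show ?thesis
      using T_lin \<sigma>_bij by (simp add: Fp_linear_vzero bij_betw_def D_sub_def)
  qed
  ultimately show ?thesis
    by (simp add: normaliser_D_def auto_def Bij_def sdprod_map_def)
qed

lemma sdprod_map_in_normaliserD:
  assumes f: "sdprod_map T \<sigma> \<in> normaliser_D p d D \<psi>"
    and T_ext: "T \<in> extensional V" and \<sigma>_ext: "\<sigma> \<in> extensional (carrier D)"
  shows "T \<in> carrier (GL_group p d)" "\<sigma> \<in> auto D" "intertwines p d D \<psi> (\<psi> \<circ> \<sigma>) T"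
proof -
  interpret D: group D by (rule group_D)
  let ?f = "sdprod_map T \<sigma>"
  have f_hom: "?f \<in> hom G G" and f_bij: "bij_betw ?f (carrier G) (carrier G)"
    and f_D: "?f ` D_sub D = D_sub D"
    using f by (auto simp: normaliser_D_def auto_def Bij_def)
  have "V \<noteq> {}" "carrier D \<noteq> {}"
    using vzero_in_Fp_vec D.one_closed by blast+
  then have bij: "bij_betw T V V" "bij_betw \<sigma> (carrier D) (carrier D)"
    using f_bij by (simp_all add: sdprod_map_def sdprod_carrier bij_betw_map_prod_iff)
  have "?f (vzero, \<one>\<^bsub>D\<^esub>) \<in> D_sub D"
    using f_D by (auto simp: D_sub_def)
  then have T_vzero: "T vzero = vzero"
    by (simp add: sdprod_map_def sdprod_carrier D_sub_def)
  have mult: "T (vadd p v (\<psi> x w)) = vadd p (T v) (\<psi> (\<sigma> x) (T w)) \<and>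
      \<sigma> (x \<otimes>\<^bsub>D\<^esub> y) = \<sigma> x \<otimes>\<^bsub>D\<^esub> \<sigma> y"
    if "v \<in> V" "w \<in> V" "x \<in> carrier D" "y \<in> carrier D" for v w x y
    using hom_mult[OF f_hom, of "(v, x)" "(w, y)"] that
    by (simp add: sdprod_map_def sdprod_carrier sdprod_mult)
  have \<sigma>_hom: "\<sigma> \<in> hom D D"
    using bij(2) mult[of vzero vzero] T_vzero by (auto intro!: homI simp: bij_betw_apply)
  then have \<sigma>_one: "\<sigma> \<one>\<^bsub>D\<^esub> = \<one>\<^bsub>D\<^esub>"
    by (simp add: hom_one group_D)
  have "Fp_linear p d T"
    using bij(1) T_vzero mult[of _ _ "\<one>\<^bsub>D\<^esub>" "\<one>\<^bsub>D\<^esub>"] \<sigma>_one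
    by (intro Fp_linear_if_additive) (auto simp: bij_betw_apply)
  then show "T \<in> carrier (GL_group p d)"
    using bij(1) T_ext by (simp add: GL_group_carrier Bij_def)
  show "\<sigma> \<in> auto D"
    using \<sigma>_hom bij(2) \<sigma>_ext by (simp add: auto_def Bij_def)
  show "intertwines p d D \<psi> (\<psi> \<circ> \<sigma>) T"
    using mult[of vzero] T_vzero bij \<sigma>_hom
    by (simp add: intertwines_def bij_betw_apply hom_in_carrier)
qed

lemma kappa_sdprod_map:
  assumes "\<sigma> \<in> extensional (carrier D)" shows "kappa D (sdprod_map T \<sigma>) = \<sigma>"
proof -
  have "kappa D (sdprod_map T \<sigma>) = restrict \<sigma> (carrier D)"
    unfolding kappa_def sdprod_map_def by (rule restrict_ext) (simp add: sdprod_carrier)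
  then show ?thesis using assms by (simp add: extensional_restrict)
qed

definition linear_part ::
  "((nat \<Rightarrow> int) \<times> 'g \<Rightarrow> (nat \<Rightarrow> int) \<times> 'g) \<Rightarrow> (nat \<Rightarrow> int) \<Rightarrow> (nat \<Rightarrow> int)" where
  "linear_part f = (\<lambda>v \<in> V. fst (f (v, \<one>\<^bsub>D\<^esub>)))"

lemma linear_part_sdprod_map:
  assumes "T \<in> extensional V" shows "linear_part (sdprod_map T \<sigma>) = T"
proof -
  have "linear_part (sdprod_map T \<sigma>) = restrict T V"
    unfolding linear_part_def sdprod_map_def
    by (rule restrict_ext) (simp add: sdprod_carrier group.is_monoid[OF group_D] monoid.one_closed)
  then show ?thesis using assms by (simp add: extensional_restrict)
qed

lemma compose_sdprod_map:
  assumes "T \<in> V \<rightarrow> V" and "\<sigma> \<in> carrier D \<rightarrow> carrier D"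
  shows "compose (carrier G) (sdprod_map S \<tau>) (sdprod_map T \<sigma>) =
           sdprod_map (compose V S T) (compose (carrier D) \<tau> \<sigma>)"
  using assms by (auto simp: compose_def sdprod_map_def sdprod_carrier fun_eq_iff)

lemma End_ring_carrier:
  "carrier (End_ring p d D \<psi>) = {T \<in> extensional V. Fp_linear p d T \<and> intertwines p d D \<psi> \<psi> T}"
  by (simp add: End_ring_def intertwines_def)

lemma Units_End_ring:
  "Units (End_ring p d D \<psi>) = {T \<in> carrier (GL_group p d). intertwines p d D \<psi> \<psi> T}"
proof (intro equalityI subsetI)
  fix T assume "T \<in> Units (End_ring p d D \<psi>)"
  then obtain S where T: "T \<in> carrier (End_ring p d D \<psi>)" and S: "S \<in> carrier (End_ring p d D \<psi>)"
    and inverse: "compose V S T = (\<lambda>v \<in> V. v)" "compose V T S = (\<lambda>v \<in> V. v)"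
    unfolding Units_def by (auto simp: End_ring_def)
  have "bij_betw T V V"
  proof (rule bij_betw_byWitness[of V S])
    show "\<forall>v\<in>V. S (T v) = v" "\<forall>v\<in>V. T (S v) = v"
      using inverse by (metis compose_eq restrict_apply')+
    show "T ` V \<subseteq> V" "S ` V \<subseteq> V"
      using T S by (auto simp: End_ring_carrier Fp_linear_def)
  qed
  then show "T \<in> {T \<in> carrier (GL_group p d). intertwines p d D \<psi> \<psi> T}"
    using T by (simp add: End_ring_carrier GL_group_carrier Bij_def)
next
  fix T assume "T \<in> {T \<in> carrier (GL_group p d). intertwines p d D \<psi> \<psi> T}"
  then have T: "T \<in> carrier (GL_group p d)" and intertw: "intertwines p d D \<psi> \<psi> T" by auto
  let ?S = "restrict (inv_into V T) V"
  have bij: "bij_betw T V V" and T_End: "T \<in> carrier (End_ring p d D \<psi>)"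
    using T intertw by (auto simp: GL_group_carrier Bij_def End_ring_carrier)
  have "?S \<in> carrier (GL_group p d)" "intertwines p d D \<psi> \<psi> ?S"
    using restrict_inv_into_GL_group[OF T] intertwines_restrict_inv_into[OF T _ intertw] by auto
  then have S_End: "?S \<in> carrier (End_ring p d D \<psi>)"
    by (auto simp: GL_group_carrier Bij_def End_ring_carrier)
  have "compose V ?S T = (\<lambda>v \<in> V. v)"
    using bij by (simp add: compose_inv_into_id[symmetric] compose_def)
  moreover have "compose V T ?S = (\<lambda>v \<in> V. v)"
    using bij by (auto simp: compose_def bij_betw_def f_inv_into_f intro!: restrict_ext)
  ultimately show "T \<in> Units (End_ring p d D \<psi>)"
    using T_End S_End unfolding Units_def by (auto simp: End_ring_def)
qed

end

locale coprime_Fp_representation = Fp_representation +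
  assumes coprime_order: "coprime (nat p) (order D)"
begin

lemma snd_auto_vector:
  assumes f: "f \<in> auto G" and v: "v \<in> V"
  shows "snd (f (v, \<one>\<^bsub>D\<^esub>)) = \<one>\<^bsub>D\<^esub>"
proof -
  interpret D: group D by (rule group_D)
  have f_hom: "f \<in> hom G G" using f by (simp add: auto_def)
  have v1: "(v, \<one>\<^bsub>D\<^esub>) \<in> carrier G" using v by (simp add: sdprod_carrier)
  define y where "y = snd (f (v, \<one>\<^bsub>D\<^esub>))"
  have y: "y \<in> carrier D"
    unfolding y_def using hom_in_carrier[OF snd_hom_sdprod] hom_in_carrier[OF f_hom v1] by blast
  have "y [^]\<^bsub>D\<^esub> nat p = snd (f ((v, \<one>\<^bsub>D\<^esub>) [^]\<^bsub>G\<^esub> nat p))"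
    unfolding y_def
    using hom_nat_pow[OF f_hom v1 group_sdprod group_sdprod]
      hom_nat_pow[OF snd_hom_sdprod hom_in_carrier[OF f_hom v1] group_sdprod group_D]
    by simp
  also have "\<dots> = \<one>\<^bsub>D\<^esub>"
    using v hom_one[OF f_hom group_sdprod group_sdprod]
    by (simp add: sdprod_vector_pow_p sdprod_one)
  finally have "D.ord y dvd nat p" using D.pow_eq_id[OF y] by blast
  moreover have "D.ord y dvd order D" using D.ord_dvd_group_order[OF y] .
  ultimately have "D.ord y = 1" using coprime_order coprime_common_divisor_nat by blast
  then show ?thesis using D.ord_eq_1[OF y] by (simp add: y_def)
qed

lemma normaliser_D_eq_sdprod_map:
  assumes f: "f \<in> normaliser_D p d D \<psi>"
  shows "f = sdprod_map (linear_part f) (kappa D f)"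
proof
  interpret D: group D by (rule group_D)
  have f_auto: "f \<in> auto G" using f by (simp add: normaliser_D_def)
  then have f_hom: "f \<in> hom G G" by (simp add: auto_def)
  fix z show "f z = sdprod_map (linear_part f) (kappa D f) z"
  proof (cases "z \<in> carrier G")
    case False
    moreover have "f \<in> extensional (carrier G)"
      using f_auto by (simp add: auto_def Bij_def)
    ultimately show ?thesis
      by (simp add: sdprod_map_def extensional_arb[of f])
  next
    case True
    then obtain v x where z: "z = (v, x)" and v: "v \<in> V" and x: "x \<in> carrier D"
      by (auto simp: sdprod_carrier)
    have v1: "(v, \<one>\<^bsub>D\<^esub>) \<in> carrier G" and x0: "(vzero, x) \<in> carrier G"
      using v x by (simp_all add: sdprod_carrier)
    have "f (v, \<one>\<^bsub>D\<^esub>) \<in> carrier G"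
      using hom_in_carrier[OF f_hom v1] .
    then have vector: "f (v, \<one>\<^bsub>D\<^esub>) = (linear_part f v, \<one>\<^bsub>D\<^esub>)" "linear_part f v \<in> V"
      using snd_auto_vector[OF f_auto v] v
      by (auto simp: linear_part_def prod_eq_iff sdprod_carrier)
    have "f (vzero, x) \<in> D_sub D"
      using f x by (auto simp: normaliser_D_def D_sub_def)
    then have rotation: "f (vzero, x) = (vzero, kappa D f x)" "kappa D f x \<in> carrier D"
      using x by (auto simp: D_sub_def kappa_def)
    have "(v, x) = (v, \<one>\<^bsub>D\<^esub>) \<otimes>\<^bsub>G\<^esub> (vzero, x)"
      using v x by (simp add: sdprod_mult)
    then have "f (v, x) = f (v, \<one>\<^bsub>D\<^esub>) \<otimes>\<^bsub>G\<^esub> f (vzero, x)"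
      using hom_mult[OF f_hom v1 x0] by simp
    then show ?thesis
      using True vector rotation by (simp add: z sdprod_mult sdprod_map_def)
  qed
qed

lemma normaliser_D_eq:
  "normaliser_D p d D \<psi> =
     {f. \<exists>T \<sigma>. f = sdprod_map T \<sigma> \<and> T \<in> carrier (GL_group p d) \<and> \<sigma> \<in> auto D \<and>
                  intertwines p d D \<psi> (\<psi> \<circ> \<sigma>) T}"
proof (intro equalityI subsetI)
  fix f assume f: "f \<in> normaliser_D p d D \<psi>"
  have eq: "sdprod_map (linear_part f) (kappa D f) = f"
    using normaliser_D_eq_sdprod_map[OF f] by (rule sym)
  have "sdprod_map (linear_part f) (kappa D f) \<in> normaliser_D p d D \<psi>"
    unfolding eq by (rule f)
  moreover have "linear_part f \<in> extensional V" "kappa D f \<in> extensional (carrier D)"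
    by (simp_all add: linear_part_def kappa_def)
  ultimately have "linear_part f \<in> carrier (GL_group p d)" "kappa D f \<in> auto D"
    "intertwines p d D \<psi> (\<psi> \<circ> kappa D f) (linear_part f)"
    by (rule sdprod_map_in_normaliserD)+
  with eq show "f \<in> {f. \<exists>T \<sigma>. f = sdprod_map T \<sigma> \<and> T \<in> carrier (GL_group p d) \<and>
                           \<sigma> \<in> auto D \<and> intertwines p d D \<psi> (\<psi> \<circ> \<sigma>) T}"
    by (intro CollectI exI[of _ "linear_part f"] exI[of _ "kappa D f"]) simp
next
  fix f assume "f \<in> {f. \<exists>T \<sigma>. f = sdprod_map T \<sigma> \<and> T \<in> carrier (GL_group p d) \<and>
                           \<sigma> \<in> auto D \<and> intertwines p d D \<psi> (\<psi> \<circ> \<sigma>) T}"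
  then obtain T \<sigma> where "f = sdprod_map T \<sigma>" and "T \<in> carrier (GL_group p d)" and "\<sigma> \<in> auto D"
    and "intertwines p d D \<psi> (\<psi> \<circ> \<sigma>) T"
    by blast
  then show "f \<in> normaliser_D p d D \<psi>" by (simp only: sdprod_map_in_normaliser)
qed

lemma kappa_image_normaliser_D:
  "kappa D ` normaliser_D p d D \<psi> = {\<sigma> \<in> auto D. rep_iso p d D (\<psi> \<circ> \<sigma>) \<psi>}"
proof -
  have "kappa D ` normaliser_D p d D \<psi> = {\<sigma> \<in> auto D. rep_iso p d D \<psi> (\<psi> \<circ> \<sigma>)}"
    unfolding normaliser_D_eq rep_iso_def intertwines_def[symmetric]
    by (force simp: kappa_sdprod_map auto_def Bij_def)
  also have "\<dots> = {\<sigma> \<in> auto D. rep_iso p d D (\<psi> \<circ> \<sigma>) \<psi>}"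
  proof (intro Collect_cong conj_cong refl iffI)
    fix \<sigma> assume "\<sigma> \<in> auto D"
    then have "\<sigma> x \<in> carrier D" if "x \<in> carrier D" for x
      using that by (auto simp: auto_def hom_in_carrier)
    then have closed: "(\<psi> \<circ> \<sigma>) x \<in> V \<rightarrow> V" "\<psi> x \<in> V \<rightarrow> V" if "x \<in> carrier D" for x
      using that by auto
    show "rep_iso p d D (\<psi> \<circ> \<sigma>) \<psi>" if "rep_iso p d D \<psi> (\<psi> \<circ> \<sigma>)"
      using rep_iso_sym[OF closed(2) that] .
    show "rep_iso p d D \<psi> (\<psi> \<circ> \<sigma>)" if "rep_iso p d D (\<psi> \<circ> \<sigma>) \<psi>"
      using rep_iso_sym[OF closed(1) that] .
  qed
  finally show ?thesis .
qed

lemma kernel_kappa_eq: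
  "{f \<in> normaliser_D p d D \<psi>. kappa D f = \<one>\<^bsub>AutoGroup D\<^esub>} =
     (\<lambda>T. sdprod_map T (\<lambda>x \<in> carrier D. x)) ` Units (End_ring p d D \<psi>)"
proof -
  have one: "\<one>\<^bsub>AutoGroup D\<^esub> = (\<lambda>x \<in> carrier D. x)"
    by (simp add: AutoGroup_def BijGroup_def)
  have id_auto: "(\<lambda>x \<in> carrier D. x) \<in> auto D"
    by (rule group.id_in_auto[OF group_D])
  have intertw_id:
    "intertwines p d D \<psi> (\<psi> \<circ> (\<lambda>x \<in> carrier D. x)) T \<longleftrightarrow> intertwines p d D \<psi> \<psi> T" for T
    by (simp add: intertwines_def)
  show ?thesis
  proof (intro equalityI subsetI)
    fix f assume "f \<in> {f \<in> normaliser_D p d D \<psi>. kappa D f = \<one>\<^bsub>AutoGroup D\<^esub>}"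
    then obtain T \<sigma> where f: "f = sdprod_map T \<sigma>" and T: "T \<in> carrier (GL_group p d)"
      and \<sigma>: "\<sigma> \<in> auto D" and intertw: "intertwines p d D \<psi> (\<psi> \<circ> \<sigma>) T"
      and kappa: "kappa D f = (\<lambda>x \<in> carrier D. x)"
      unfolding normaliser_D_eq one by blast
    have "\<sigma> = (\<lambda>x \<in> carrier D. x)"
      using kappa \<sigma> by (simp add: f kappa_sdprod_map auto_def Bij_def)
    then show "f \<in> (\<lambda>T. sdprod_map T (\<lambda>x \<in> carrier D. x)) ` Units (End_ring p d D \<psi>)"
      using T intertw by (simp add: f Units_End_ring intertw_id)
  next
    fix f assume "f \<in> (\<lambda>T. sdprod_map T (\<lambda>x \<in> carrier D. x)) ` Units (End_ring p d D \<psi>)"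
    then obtain T where f: "f = sdprod_map T (\<lambda>x \<in> carrier D. x)"
      and T: "T \<in> carrier (GL_group p d)" and intertw: "intertwines p d D \<psi> \<psi> T"
      by (auto simp: Units_End_ring)
    then have "f \<in> normaliser_D p d D \<psi>"
      using sdprod_map_in_normaliser[OF T id_auto] by (simp add: intertw_id)
    moreover have "kappa D f = \<one>\<^bsub>AutoGroup D\<^esub>"
      by (simp add: f one kappa_sdprod_map)
    ultimately show "f \<in> {f \<in> normaliser_D p d D \<psi>. kappa D f = \<one>\<^bsub>AutoGroup D\<^esub>}" by simp
  qed
qed

lemma kernel_kappa_iso_units_End_ring:
  "(AutoGroup G)\<lparr>carrier := {f \<in> normaliser_D p d D \<psi>. kappa D f = \<one>\<^bsub>AutoGroup D\<^esub>}\<rparr>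
     \<cong> units_of (End_ring p d D \<psi>)"
proof (rule is_isoI)
  let ?K = "{f \<in> normaliser_D p d D \<psi>. kappa D f = \<one>\<^bsub>AutoGroup D\<^esub>}"
  let ?U = "Units (End_ring p d D \<psi>)"
  let ?lift = "\<lambda>T. sdprod_map T (\<lambda>x \<in> carrier D. x)"
  have U_ext: "T \<in> extensional V" and U_closed: "T \<in> V \<rightarrow> V" if "T \<in> ?U" for T
    using that by (auto simp: Units_End_ring GL_group_carrier Bij_def bij_betw_def)
  have linear_part_lift: "linear_part (?lift T) = T" if "T \<in> ?U" for T
    using linear_part_sdprod_map[OF U_ext[OF that]] .
  have bij: "bij_betw linear_part ?K ?U"
    unfolding kernel_kappa_eq
    by (rule bij_betw_byWitness[where f' = ?lift]) (auto simp: linear_part_lift)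
  have "linear_part (f \<otimes>\<^bsub>(AutoGroup G)\<lparr>carrier := ?K\<rparr>\<^esub> g) =
          linear_part f \<otimes>\<^bsub>units_of (End_ring p d D \<psi>)\<^esub> linear_part g"
    if fg_K: "f \<in> ?K" "g \<in> ?K" for f g
  proof -
    obtain S T where S: "S \<in> ?U" and T: "T \<in> ?U" and fg: "f = ?lift S" "g = ?lift T"
      using fg_K unfolding kernel_kappa_eq by blast
    have "f \<in> Bij (carrier G)" "g \<in> Bij (carrier G)"
      using fg_K by (auto simp: normaliser_D_def auto_def)
    then have "f \<otimes>\<^bsub>(AutoGroup G)\<lparr>carrier := ?K\<rparr>\<^esub> g = compose (carrier G) f g"
      by (simp add: AutoGroup_def BijGroup_def)
    also have "\<dots> = sdprod_map (compose V S T)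
        (compose (carrier D) (\<lambda>x \<in> carrier D. x) (\<lambda>x \<in> carrier D. x))"
      unfolding fg using U_closed[OF T] by (intro compose_sdprod_map) auto
    finally show ?thesis
      using S T
      by (simp add: linear_part_sdprod_map linear_part_lift fg units_of_mult End_ring_def compose_def)
  qed
  then have "linear_part \<in> hom ((AutoGroup G)\<lparr>carrier := ?K\<rparr>) (units_of (End_ring p d D \<psi>))"
    using bij by (intro homI) (auto simp: units_of_carrier bij_betw_apply)
  then show "linear_part \<in> iso ((AutoGroup G)\<lparr>carrier := ?K\<rparr>) (units_of (End_ring p d D \<psi>))"
    using bij by (simp add: iso_def units_of_carrier)
qed

end

lemma coprime_odd_prime_double:
  fixes p :: int
  assumes p: "Factorial_Ring.prime p" and "odd p" and "\<not> p dvd int r"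
  shows "coprime (nat p) (2 * r)"
proof -
  have "\<not> p dvd 2"
  proof
    assume "p dvd 2"
    then have "p \<le> 2" by (simp add: zdvd_imp_le)
    then have "p = 2" using prime_gt_1_int[OF p] by simp
    then show False using \<open>odd p\<close> by simp
  qed
  then have "\<not> p dvd 2 * int r"
    using prime_dvd_mult_iff[OF p, of 2 "int r"] assms(3) by blast
  then have "coprime p (2 * int r)"
    by (rule prime_imp_coprime[OF p])
  moreover have "p = int (nat p)" "2 * int r = int (2 * r)"
    using prime_gt_0_int[OF p] by simp_all
  ultimately show ?thesis by (metis coprime_int_iff)
qed

theorem lemma5p3:
  fixes p :: int and r d :: nat
    and \<psi> :: "nat \<times> bool \<Rightarrow> (nat \<Rightarrow> int) \<Rightarrow> (nat \<Rightarrow> int)"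
  defines "D \<equiv> dihedral_group r"
  defines "G \<equiv> sdprod p d D \<psi>"
  defines "N \<equiv> normaliser_D p d D \<psi>"
  assumes "Factorial_Ring.prime p" and "odd p"
    and "r \<ge> 3" and "\<not> p dvd int r"
    and "\<psi> \<in> hom D (GL_group p d)"
    and "irreducible_rep p d D \<psi>"
    and "\<not> trivial_rep p d D \<psi>"
  shows "(AutoGroup G)\<lparr>carrier := {f \<in> N. kappa D f = \<one>\<^bsub>AutoGroup D\<^esub>}\<rparr>
           \<cong> units_of (End_ring p d D \<psi>)
         \<and> kappa D ` N = {\<sigma> \<in> auto D. rep_iso p d D (\<psi> \<circ> \<sigma>) \<psi>}"
proof -
  interpret coprime_Fp_representation p d D \<psi>
  proof (intro coprime_Fp_representation.intro Fp_representation.intro Fp_space.intro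
      Fp_representation_axioms.intro coprime_Fp_representation_axioms.intro)
    show "0 < p" using assms(4) by (rule prime_gt_0_int)
    show "group D" unfolding D_def using \<open>r \<ge> 3\<close> by (intro group_dihedral_group) simp
    show "\<psi> \<in> hom D (GL_group p d)" by fact
    show "coprime (nat p) (order D)"
      unfolding D_def order_dihedral_group using assms(4,5,7) by (rule coprime_odd_prime_double)
  qed
  show ?thesis
    unfolding G_def N_def using kernel_kappa_iso_units_End_ring kappa_image_normaliser_D by blast
qed

end
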